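(* Let $\lambda\in\mathcal O$ be a nonzero limit ordinal and $\mathcal A,\mathcal B:\mathcal O\to\mathrm{SAT}$. Then $$\limsup_{\alpha\to\lambda}\big(\mathcal A(\alpha)\Rightarrow\mathcal B(\alpha)\big)\subseteq\Big(\liminf_{\lambda}\mathcal A\Big)\Rightarrow\Big(\limsup_{\lambda}\mathcal B\Big).$$
   Context: $\mathcal O$ is the set of ordinals $\le\top_{\mathsf{ord}}$ for a fixed ordinal $\top_{\mathsf{ord}}$ ($=\beth_\omega$). For $f:\mathcal O\to\mathfrak L$ into a complete lattice and a nonzero limit $\lambda$: $\liminf_{\alpha\to\lambda}f(\alpha)=\sup_{\alpha_0<\lambda}\inf_{\alpha_0\le\alpha<\lambda}f(\alpha)$, $\limsup_{\alpha\to\lambda}f(\alpha)=\inf_{\alpha_0<\lambda}\sup_{\alpha_0\le\alpha<\lambda}f(\alpha)$. Terms of an untyped lambda calculus with constants: $r,s,t::=c\mid x\mid\lambda x\,t\mid r\,s$ (constants $\langle\rangle,\mathsf{pair},\mathsf{fst},\mathsf{snd},\mathsf{inl},\mathsf{inr},\mathsf{case},\mathsf{in},\mathsf{out},\mathsf{fix}^\mu_n,\mathsf{fix}^\nu_n$). $\mathrm{SAT}$ denotes the set of saturated sets of terms (sets of strongly normalizing terms containing all neutral terms and closed under weak-head expansion); it is a complete lattice ordered by $\subseteq$ in which infima and suprema of nonempty families are intersection and union; $\liminf,\limsup$ are computed in it. For $\mathcal A,\mathcal B\in\mathrm{SAT}$, the saturated set $\mathcal A\Rightarrow\mathcal B:=\bigcap_{s\in\mathcal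 A}(\_\,s)^{-1}\mathcal B=\{r\mid r\,s\in\mathcal B\text{ for all }s\in\mathcal A\}$ (with $\bigcap_{s\in\emptyset}$ read as the set of all strongly normalizing terms). *)

theory Defs
  imports Main
begin

datatype cst = CUnit | CPair | CFst | CSnd | CInl | CInr | CCase | CIn | COut
  | CFixMu nat | CFixNu nat

datatype tm = Const cst | Var nat | Lam tm | App tm tm

definition apps :: "tm \<Rightarrow> tm list \<Rightarrow> tm" where
  "apps t ts = foldl App t ts"

fun lift :: "tm \<Rightarrow> nat \<Rightarrow> tm" where
  "lift (Const c) k = Const c"
| "lift (Var i) k = (if i < k then Var i else Var (Suc i))"
| "lift (Lam t) k = Lam (lift t (Suc k))"
| "lift (App r s) k = App (lift r k) (lift s k)"

fun subst :: "tm \<Rightarrow> tm \<Rightarrow> nat \<Rightarrow> tm" where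
  "subst (Const c) s k = Const c"
| "subst (Var i) s k = (if k < i then Var (i - 1) else if i = k then s else Var i)"
| "subst (Lam t) s k = Lam (subst t (lift s 0) (Suc k))"
| "subst (App r t) s k = App (subst r s k) (subst t s k)"

inductive contr :: "tm \<Rightarrow> tm \<Rightarrow> bool" where
  beta: "contr (App (Lam t) s) (subst t s 0)"
| fst_pair: "contr (App (Const CFst) (App (App (Const CPair) r) s)) r"
| snd_pair: "contr (App (Const CSnd) (App (App (Const CPair) r) s)) s"
| case_inl: "contr (App (Const CCase) (App (Const CInl) r))
               (Lam (Lam (App (Var 1) (lift (lift r 0) 0))))"
| case_inr: "contr (App (Const CCase) (App (Const CInr) r))
               (Lam (Lam (App (Var 0) (lift (lift r 0) 0))))"
| out_in: "contr (App (Const COut) (App (Const CIn) r)) r"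
| fix_mu: "length ts = n \<Longrightarrow>
    contr (apps (Const (CFixMu n)) (s # ts @ [App (Const CIn) t]))
          (apps s (App (Const (CFixMu n)) s # ts @ [App (Const CIn) t]))"
| fix_nu: "length ts = n \<Longrightarrow>
    contr (App (Const COut) (apps (Const (CFixNu n)) (s # ts)))
          (App (Const COut) (apps s (App (Const (CFixNu n)) s # ts)))"

inductive red :: "tm \<Rightarrow> tm \<Rightarrow> bool" where
  red_contr: "contr t t' \<Longrightarrow> red t t'"
| red_lam: "red t t' \<Longrightarrow> red (Lam t) (Lam t')"
| red_appl: "red r r' \<Longrightarrow> red (App r s) (App r' s)"
| red_appr: "red s s' \<Longrightarrow> red (App r s) (App r s')"

inductive SN :: "tm \<Rightarrow> bool" where
  SNI: "(\<And>t'. red t t' \<Longrightarrow> SN t') \<Longrightarrow> SN t"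

datatype ectx = Hole | EApp ectx tm | EFst ectx | ESnd ectx | ECase ectx | EOut ectx
  | EFixMu nat tm "tm list" ectx

fun wf_ctx :: "ectx \<Rightarrow> bool" where
  "wf_ctx Hole = True"
| "wf_ctx (EApp E s) = wf_ctx E"
| "wf_ctx (EFst E) = wf_ctx E"
| "wf_ctx (ESnd E) = wf_ctx E"
| "wf_ctx (ECase E) = wf_ctx E"
| "wf_ctx (EOut E) = wf_ctx E"
| "wf_ctx (EFixMu n s ts E) = (length ts = n \<and> wf_ctx E)"

fun fill :: "ectx \<Rightarrow> tm \<Rightarrow> tm" where
  "fill Hole r = r"
| "fill (EApp E s) r = App (fill E r) s"
| "fill (EFst E) r = App (Const CFst) (fill E r)"
| "fill (ESnd E) r = App (Const CSnd) (fill E r)"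
| "fill (ECase E) r = App (Const CCase) (fill E r)"
| "fill (EOut E) r = App (Const COut) (fill E r)"
| "fill (EFixMu n s ts E) r = apps (Const (CFixMu n)) (s # ts @ [fill E r])"

definition whd :: "tm \<Rightarrow> tm \<Rightarrow> bool" where
  "whd t t' \<longleftrightarrow> (\<exists>E r r'. wf_ctx E \<and> contr r r' \<and> t = fill E r \<and> t' = fill E r')"

definition neutral :: "tm \<Rightarrow> bool" where
  "neutral t \<longleftrightarrow> (\<exists>E x. wf_ctx E \<and> t = fill E (Var x))"

definition SAT :: "tm set \<Rightarrow> bool" where
  "SAT A \<longleftrightarrow> A \<subseteq> {t. SN t}
     \<and> {t. neutral t \<and> SN t} \<subseteq> A
     \<and> (\<forall>t t'. whd t t' \<longrightarrow> t' \<in> A \<longrightarrow> SN t \<longrightarrow> t \<in> A)"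

definition arr :: "tm set \<Rightarrow> tm set \<Rightarrow> tm set" (infixr "\<Rrightarrow>" 60) where
  "A \<Rrightarrow> B = (if A = {} then {t. SN t} else (\<Inter>s\<in>A. {r. App r s \<in> B}))"

definition limit_ord :: "'o::wellorder \<Rightarrow> bool" where
  "limit_ord l \<longleftrightarrow> (\<exists>b. b < l) \<and> (\<forall>b<l. \<exists>c. b < c \<and> c < l)"

text \<open>liminf/limsup in SAT; the families involved are nonempty (l is a nonzero limit),
  so infima/suprema in SAT are intersections/unions.\<close>
definition liminf_at :: "'o::wellorder \<Rightarrow> ('o \<Rightarrow> tm set) \<Rightarrow> tm set" where
  "liminf_at l f = (\<Union>a0\<in>{..<l}. \<Inter>a\<in>{a0..<l}. f a)"

definition limsup_at :: "'o::wellorder \<Rightarrow> ('o \<Rightarrow> tm set) \<Rightarrow> tm set" where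
  "limsup_at l f = (\<Inter>a0\<in>{..<l}. \<Union>a\<in>{a0..<l}. f a)"

end

theory Submission
  imports Defs
begin

text \<open>If \<open>t\<close> lies in \<open>A \<alpha> \<Rrightarrow> B \<alpha>\<close> cofinally often below \<open>\<lambda>\<close> and \<open>s\<close> lies in \<open>A \<alpha>\<close>
  eventually below \<open>\<lambda>\<close>, then above the threshold for \<open>s\<close> there are still cofinally many
  \<open>\<alpha>\<close> with \<open>t\<close> in \<open>A \<alpha> \<Rrightarrow> B \<alpha>\<close>, and for these \<open>t s \<in> B \<alpha>\<close>; so \<open>t s\<close> lies in the
  limsup of \<open>B\<close>. Strong normalisation of \<open>t\<close>, needed when the liminf of \<open>A\<close> is empty,
  comes from any single \<open>\<alpha> < \<lambda>\<close> with \<open>t \<in> A \<alpha> \<Rrightarrow> B \<alpha>\<close>.\<close>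

lemma SN_App_left:
  assumes "SN (App r s)" shows "SN r"
proof -
  have "SN u \<Longrightarrow> u = App r s \<Longrightarrow> SN r" for u
  proof (induction u arbitrary: r rule: SN.induct)
    case (SNI t)
    show ?case
    proof (rule SN.SNI)
      fix r' assume "red r r'"
      then have "red t (App r' s)" using SNI.prems by (simp add: red_appl)
      then show "SN r'" using SNI.IH by blast
    qed
  qed
  then show ?thesis using assms by blast
qed

lemma App_in_arr: "t \<in> A \<Rrightarrow> B \<Longrightarrow> s \<in> A \<Longrightarrow> App t s \<in> B"
  by (auto simp: arr_def split: if_splits)

lemma arrI: "SN t \<Longrightarrow> (\<And>s. s \<in> A \<Longrightarrow> App t s \<in> B) \<Longrightarrow> t \<in> A \<Rrightarrow> B"
  by (auto simp: arr_def)

lemma arr_SN: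
  assumes "SAT B" "t \<in> A \<Rrightarrow> B" shows "SN t"
proof (cases "A = {}")
  case True
  then show ?thesis using assms(2) by (simp add: arr_def)
next
  case False
  then obtain s where "s \<in> A" by blast
  then have "App t s \<in> B" using App_in_arr assms(2) by blast
  then have "SN (App t s)" using assms(1) by (auto simp: SAT_def)
  then show ?thesis by (rule SN_App_left)
qed

lemma liminf_at_iff: "t \<in> liminf_at l f \<longleftrightarrow> (\<exists>a0<l. \<forall>a\<in>{a0..<l}. t \<in> f a)"
  unfolding liminf_at_def by (auto simp only: UN_iff lessThan_iff)

lemma limsup_at_iff: "t \<in> limsup_at l f \<longleftrightarrow> (\<forall>a0<l. \<exists>a\<in>{a0..<l}. t \<in> f a)"
  unfolding limsup_at_def by (auto simp only: INT_iff lessThan_iff)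

lemma App_in_limsup_at:
  assumes t: "t \<in> limsup_at l (\<lambda>a. A a \<Rrightarrow> B a)" and s: "s \<in> liminf_at l A"
  shows "App t s \<in> limsup_at l B"
  unfolding limsup_at_iff
proof (intro allI impI)
  fix a0 assume "a0 < l"
  from s obtain b0 where b0: "b0 < l" "\<And>a. b0 \<le> a \<Longrightarrow> a < l \<Longrightarrow> s \<in> A a"
    unfolding liminf_at_iff by auto
  have "max a0 b0 < l" using \<open>a0 < l\<close> b0(1) by (simp add: max_def)
  with t obtain a where a: "max a0 b0 \<le> a" "a < l" "t \<in> A a \<Rrightarrow> B a"
    unfolding limsup_at_iff by (meson atLeastLessThan_iff)
  then have "App t s \<in> B a" using b0(2) App_in_arr by simp
  then show "\<exists>a\<in>{a0..<l}. App t s \<in> B a" using a by auto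
qed

lemma limsup_at_arr_SN:
  assumes "\<And>a. SAT (B a)" "b < l" "t \<in> limsup_at l (\<lambda>a. A a \<Rrightarrow> B a)"
  shows "SN t"
proof -
  obtain a where "t \<in> A a \<Rrightarrow> B a" using assms(2,3) by (auto simp: limsup_at_iff)
  then show ?thesis using arr_SN assms(1) by blast
qed

theorem theorem4p7:
  fixes l :: "'o::wellorder" and A B :: "'o \<Rightarrow> tm set"
  assumes "limit_ord l"
    and "\<And>a. SAT (A a)" and "\<And>a. SAT (B a)"
  shows "limsup_at l (\<lambda>a. A a \<Rrightarrow> B a) \<subseteq> liminf_at l A \<Rrightarrow> limsup_at l B"
proof
  fix t assume t: "t \<in> limsup_at l (\<lambda>a. A a \<Rrightarrow> B a)"
  obtain b where "b < l" using assms(1) by (auto simp: limit_ord_def)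
  then have "SN t" using limsup_at_arr_SN assms(3) t by blast
  then show "t \<in> liminf_at l A \<Rrightarrow> limsup_at l B"
    using App_in_limsup_at t by (blast intro: arrI)
qed

end
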